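(* Each of the points $p_+$, $p_-$ is a pairwise transversal self-intersection for every curve $\overline{\Xi^{\pm}_l}$, and one has $\operatorname{mult}_{p_\pm}(\overline{\Xi_l^\pm}) = \left[\frac{l}{2}\right]$; $\operatorname{mult}_{p_\pm}(\overline{\Xi_l^\mp}) = l-\left[\frac{l}{2}\right]$. Moreover, all the local branches of the curve $\overline{\Xi^+_l}\cup\overline{\Xi^-_l}$ at $p_{\pm}$ are transversal to the infinity line $\{\theta=0\}$.
   Context: Let $l\in\mathbb N$ and let $\mathcal{G}_l$ be the $l\times l$-matrix whose entries on the antidiagonal are $(\mathcal{G}_l)_{i,l+1-i}=\mu$ for $i=1,\dots,l$, whose entries just below the antidiagonal are $(\mathcal{G}_l)_{i,l+2-i}=-(l+1-i)$ for $i=2,\dots,l$ (so $(\mathcal{G}_l)_{2,l}=-(l-1)$, $(\mathcal{G}_l)_{l,2}=-1$), and all other entries are zero. Let $\Xi_l^\pm=\{\det(\mathcal{G}_l\pm r\operatorname{Id})=0\}\subset\mathbb C^2_{(\mu,r)}$, and let $\overline{\Xi_l^\pm}$ denote their projective closures in $\mathbb{P}^2_{(\mu:r:\theta)}$ (the affine plane being the chart $\theta=1$; $\{\theta=0\}$ is the infinity line). Let $p_\pm=(1:\pm1:0)$. For a point $P$ on a curve $C$, $\operatorname{mult}_P(C)$ denotes the multiplicity of $P$ on $C$, i.e. its intersection index at $P$ with a generic line through $P$. A point $P$ is called a pairwise transversal self-intersection if it is the intersection of $k$ pairwise transversal smooth local branches (then its multiplicity is $k$); a regular point, corresponding to one branch,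 is also treated as a pairwise transversal self-intersection. Here $[x]$ is the integer part. *)

theory Defs
  imports "HOL-Analysis.Analysis" "Jordan_Normal_Form.Determinant"
begin

text \<open>The l x l matrix G_l(mu) (0-based indices i,j < l): the antidiagonal
  (1-based (i, l+1-i)) carries mu, the entries just below it (1-based (i, l+2-i),
  i = 2..l) carry -(l+1-i); all others are 0.\<close>
definition G_mat :: "nat \<Rightarrow> complex \<Rightarrow> complex Matrix.mat" where
  "G_mat l \<mu> = Matrix.mat l l (\<lambda>(i, j).
      if i + j + 1 = l then \<mu>
      else if i + j = l then - of_nat (l - i)
      else 0)"

text \<open>The polynomial det(G_l + s r Id) as a function of (mu, r); s = 1 gives Xi^+, s = -1 gives Xi^-.\<close>
definition Xi_poly :: "nat \<Rightarrow> complex \<Rightarrow> complex \<Rightarrow> complex \<Rightarrow> complex" where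
  "Xi_poly l s \<mu> r = Determinant.det (G_mat l \<mu> + Matrix.smult_mat (s * r) (1\<^sub>m l))"

definition Xi :: "nat \<Rightarrow> complex \<Rightarrow> (complex \<times> complex) set" where
  "Xi l s = {(\<mu>, r). Xi_poly l s \<mu> r = 0}"

text \<open>The projective closure of Xi_l^s in P^2 = {(mu:r:theta)}, read in the affine chart
  mu = 1 with coordinates (r, theta): a point (mu:r:theta) with mu \<noteq> 0 corresponds to
  (r/mu, theta/mu), and the affine point (mu, r) (theta = 1, mu \<noteq> 0) to (r/mu, 1/mu).
  Since the chart is open in P^2, the part of the (analytic = Zariski) closure
  lying in the chart is the closure, in C^2, of the image of the affine curve.\<close>
definition Xi_closure_chart :: "nat \<Rightarrow> complex \<Rightarrow> (complex \<times> complex) set" where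
  "Xi_closure_chart l s = closure ((\<lambda>(\<mu>, r). (r / \<mu>, 1 / \<mu>)) ` (Xi l s \<inter> {(\<mu>, r). \<mu> \<noteq> 0}))"

text \<open>A curve C (given in local coordinates (r, theta) of the chart mu = 1) has at the point
  (r0, 0) on the infinity line theta = 0 exactly k local branches, each smooth, pairwise
  transversal, and transversal to the infinity line theta = 0: near the point, C is the union
  of k graphs r = phi_j(theta) of holomorphic functions with phi_j(0) = r0 and pairwise distinct
  tangent slopes phi_j'(0). (A graph over the theta-axis is exactly a smooth branch transversal
  to theta = 0.) For k = 0 this says the point does not lie on C.\<close>
definition transversal_branches_at_infinity ::
    "(complex \<times> complex) set \<Rightarrow> complex \<Rightarrow> nat \<Rightarrow> bool" where
  "transversal_branches_at_infinity C r0 k \<longleftrightarrow>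
     (\<exists>U \<delta> (\<phi> :: nat \<Rightarrow> complex \<Rightarrow> complex).
        open U \<and> (r0, 0) \<in> U \<and> \<delta> > 0 \<and>
        (\<forall>j<k. \<phi> j holomorphic_on ball 0 \<delta> \<and> \<phi> j 0 = r0) \<and>
        (\<forall>i<k. \<forall>j<k. i \<noteq> j \<longrightarrow> deriv (\<phi> i) 0 \<noteq> deriv (\<phi> j) 0) \<and>
        C \<inter> U = {(\<phi> j t, t) | j t. j < k \<and> t \<in> ball 0 \<delta>})"

end

theory Submission
  imports Defs "Jordan_Normal_Form.Char_Poly"
begin

text \<open>In the chart \<open>R = r / \<mu>\<close>, \<open>T = 1 / \<mu>\<close> of the line at infinity the curve is
  \<open>det (G(T) + s R) = 0\<close> with \<open>G(T) = J (1 - T D)\<close>, where \<open>J\<close> reverses coordinates and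
  \<open>D\<close> differentiates coefficient vectors. In the basis given by the coefficient vectors of
  \<open>(x - 1)\<^sup>k (x + 1)\<^sup>l\<^sup>-\<^sup>1\<^sup>-\<^sup>k\<close>, \<open>J\<close> becomes \<open>diag ((-1)\<^sup>k)\<close> and \<open>D\<close> becomes tridiagonal. Hence on
  \<open>T = 0\<close> the curve meets only \<open>R = \<plusminus>1\<close>, and \<open>R = e\<close> is a root exactly for the rows \<open>k\<close>
  with \<open>(-1)\<^sup>k = - s e\<close>. Substituting \<open>R = e + a T\<close> makes these rows divisible by \<open>T\<close>; the
  remaining determinant \<open>H(a, T)\<close> has, at \<open>T = 0\<close>, simple zeros at the pairwise distinct slopes
  \<open>a\<^sub>k = e (k - (l - 1) / 2)\<close>. The implicit function theorem turns them into holomorphic branches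
  \<open>R = e + a\<^sub>k(T) T\<close>, graphs over the \<open>T\<close>-axis with slopes \<open>a\<^sub>k\<close>. For small \<open>T \<noteq> 0\<close> the
  branches through \<open>1\<close> and \<open>-1\<close> give \<open>l\<close> distinct roots of the degree \<open>l\<close> polynomial
  \<open>R \<mapsto> det (G(T) + s R)\<close>, so near \<open>(e, 0)\<close> they make up the whole curve, and counting the
  rows by parity gives \<open>l div 2\<close> or \<open>l - l div 2\<close> of them.\<close>

section \<open>Implicit functions from divided differences\<close>

text \<open>The divided differences \<open>D1\<close>, \<open>D2\<close> replace partial derivatives of \<open>f\<close> in the two
  variables; in particular \<open>D1 a a T\<close> is \<open>\<partial>f/\<partial>a\<close>.\<close>
locale simple_zero =
  fixes f :: "complex \<Rightarrow> complex \<Rightarrow> complex"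
    and D1 D2 :: "complex \<Rightarrow> complex \<Rightarrow> complex \<Rightarrow> complex"
    and a0 :: complex
  assumes divided_difference1: "\<And>a b T. f a T - f b T = (a - b) * D1 a b T"
    and divided_difference2: "\<And>a T T'. f a T - f a T' = (T - T') * D2 a T T'"
    and continuous_D1: "continuous_on UNIV (\<lambda>(a, b, T). D1 a b T)"
    and continuous_D2: "continuous_on UNIV (\<lambda>(a, T, T'). D2 a T T')"
    and zero: "f a0 0 = 0"
    and simple: "D1 a0 a0 0 \<noteq> 0"
begin

lemma D1_tendsto:
  assumes "(g \<longlongrightarrow> a) F" "(h \<longlongrightarrow> b) F" "(k \<longlongrightarrow> T) F"
  shows "((\<lambda>x. D1 (g x) (h x) (k x)) \<longlongrightarrow> D1 a b T) F"
proof -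
  have "isCont (\<lambda>(a, b, T). D1 a b T) (a, b, T)"
    using continuous_D1 continuous_on_eq_continuous_at[OF open_UNIV] by blast
  from isCont_tendsto_compose[OF this tendsto_Pair[OF assms(1) tendsto_Pair[OF assms(2,3)]]]
  show ?thesis by simp
qed

lemma D2_tendsto:
  assumes "(g \<longlongrightarrow> a) F" "(h \<longlongrightarrow> T) F" "(k \<longlongrightarrow> T') F"
  shows "((\<lambda>x. D2 (g x) (h x) (k x)) \<longlongrightarrow> D2 a T T') F"
proof -
  have "isCont (\<lambda>(a, T, T'). D2 a T T') (a, T, T')"
    using continuous_D2 continuous_on_eq_continuous_at[OF open_UNIV] by blast
  from isCont_tendsto_compose[OF this tendsto_Pair[OF assms(1) tendsto_Pair[OF assms(2,3)]]]
  show ?thesis by simp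
qed

lemma isCont_f: "isCont (f a) T0"
proof -
  have "((\<lambda>T. D2 a T T0) \<longlongrightarrow> D2 a T0 T0) (at T0)"
    by (rule D2_tendsto) (rule tendsto_const tendsto_ident_at)+
  then have "((\<lambda>T. f a T0 + (T - T0) * D2 a T T0) \<longlongrightarrow> f a T0 + (T0 - T0) * D2 a T0 T0) (at T0)"
    by (intro tendsto_add tendsto_mult tendsto_diff tendsto_const tendsto_ident_at)
  moreover have "(\<lambda>T. f a T0 + (T - T0) * D2 a T T0) = f a"
    using divided_difference2[of a _ T0] by (auto simp: algebra_simps)
  ultimately show ?thesis
    by (simp add: isCont_def)
qed

text \<open>Zeros of \<open>f _ T\<close> are the fixed points of a Newton map with frozen derivative.\<close>
definition newton :: "complex \<Rightarrow> complex \<Rightarrow> complex" where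
  "newton T a = a - f a T / D1 a0 a0 0"

lemma newton_fixed_iff: "newton T a = a \<longleftrightarrow> f a T = 0"
  using simple by (auto simp: newton_def)

lemma newton_diff:
  "newton T a - newton T b = (a - b) * (D1 a0 a0 0 - D1 a b T) / D1 a0 a0 0"
proof -
  have "newton T a - newton T b = (a - b) - (f a T - f b T) / D1 a0 a0 0"
    by (simp add: newton_def diff_divide_distrib)
  also have "\<dots> = (a - b) * (D1 a0 a0 0 - D1 a b T) / D1 a0 a0 0"
    using simple by (simp add: divided_difference1 field_simps)
  finally show ?thesis .
qed

lemma contraction_radius:
  assumes "\<epsilon> > 0"
  obtains r \<delta> where "0 < r" "r \<le> \<epsilon>" "0 < \<delta>"
    "\<And>a b T. a \<in> cball a0 r \<Longrightarrow> b \<in> cball a0 r \<Longrightarrow> T \<in> ball 0 \<delta> \<Longrightarrow>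
       norm (D1 a b T - D1 a0 a0 0) \<le> norm (D1 a0 a0 0) / 2"
    "\<And>T. T \<in> ball 0 \<delta> \<Longrightarrow> norm (f a0 T) \<le> norm (D1 a0 a0 0) * r / 2"
proof -
  define d where "d = norm (D1 a0 a0 0)"
  have d: "d > 0"
    using simple by (simp add: d_def)
  have "isCont (\<lambda>(a, b, T). D1 a b T) (a0, a0, 0)"
    using continuous_D1 continuous_on_eq_continuous_at[OF open_UNIV] by blast
  then obtain \<rho> where \<rho>: "\<rho> > 0"
    "\<And>x. dist x (a0, a0, 0) < \<rho> \<Longrightarrow> dist ((\<lambda>(a, b, T). D1 a b T) x) (D1 a0 a0 0) < d / 2"
    unfolding continuous_at_eps_delta using d by (metis case_prod_conv half_gt_zero)
  define r where "r = min (\<rho> / 4) \<epsilon>"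
  have r: "0 < r" "r \<le> \<epsilon>"
    using \<rho> assms by (auto simp: r_def)
  obtain \<delta>0 where \<delta>0: "\<delta>0 > 0" "\<And>T. dist T 0 < \<delta>0 \<Longrightarrow> dist (f a0 T) (f a0 0) < d * r / 2"
    using isCont_f[of 0 a0] d r unfolding continuous_at_eps_delta
    by (metis half_gt_zero mult_pos_pos)
  show thesis
  proof (rule that[of r "min \<delta>0 r"])
    fix a b T :: complex
    assume "a \<in> cball a0 r" "b \<in> cball a0 r" "T \<in> ball 0 (min \<delta>0 r)"
    then have "norm (a - a0) \<le> \<rho> / 4" "norm (b - a0) \<le> \<rho> / 4" "norm T < \<rho> / 4"
      by (auto simp: r_def dist_norm norm_minus_commute)
    then have "norm (a - a0) + (norm (b - a0) + norm T) < \<rho>"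
      using \<rho>(1) by linarith
    moreover have "norm (a - a0, b - a0, T) \<le> norm (a - a0) + (norm (b - a0) + norm T)"
      by (meson add_left_mono norm_Pair_le order_trans)
    ultimately have "dist (a, b, T) (a0, a0, 0) < \<rho>"
      by (simp add: dist_norm)
    then show "norm (D1 a b T - D1 a0 a0 0) \<le> norm (D1 a0 a0 0) / 2"
      using \<rho>(2) by (fastforce simp: d_def dist_norm)
  next
    fix T :: complex assume "T \<in> ball 0 (min \<delta>0 r)"
    then show "norm (f a0 T) \<le> norm (D1 a0 a0 0) * r / 2"
      using \<delta>0(2)[of T] zero by (simp add: d_def dist_norm)
  qed (use r \<delta>0(1) in auto)
qed

end

locale newton_contraction = simple_zero +
  fixes r \<delta> :: real
  assumes r_pos: "0 < r" and \<delta>_pos: "0 < \<delta>"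
    and D1_close: "\<And>a b T. a \<in> cball a0 r \<Longrightarrow> b \<in> cball a0 r \<Longrightarrow> T \<in> ball 0 \<delta> \<Longrightarrow>
       norm (D1 a b T - D1 a0 a0 0) \<le> norm (D1 a0 a0 0) / 2"
    and f_small: "\<And>T. T \<in> ball 0 \<delta> \<Longrightarrow> norm (f a0 T) \<le> norm (D1 a0 a0 0) * r / 2"
begin

lemma D1_nonzero:
  assumes "a \<in> cball a0 r" "b \<in> cball a0 r" "T \<in> ball 0 \<delta>"
  shows "D1 a b T \<noteq> 0"
  using D1_close[OF assms] simple by auto

lemma newton_lipschitz:
  assumes "T \<in> ball 0 \<delta>" "a \<in> cball a0 r" "b \<in> cball a0 r"
  shows "dist (newton T a) (newton T b) \<le> 1/2 * dist a b"
proof -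
  have "dist (newton T a) (newton T b)
      = norm (a - b) * norm (D1 a0 a0 0 - D1 a b T) / norm (D1 a0 a0 0)"
    by (simp add: dist_norm newton_diff norm_mult norm_divide)
  also have "\<dots> \<le> norm (a - b) * (norm (D1 a0 a0 0) / 2) / norm (D1 a0 a0 0)"
    using D1_close[OF assms(2,3,1)]
    by (intro divide_right_mono mult_left_mono) (auto simp: norm_minus_commute)
  also have "\<dots> = 1/2 * dist a b"
    using simple by (simp add: dist_norm)
  finally show ?thesis .
qed

lemma newton_maps_cball:
  assumes "T \<in> ball 0 \<delta>"
  shows "newton T ` cball a0 r \<subseteq> cball a0 r"
proof
  fix y assume "y \<in> newton T ` cball a0 r"
  then obtain a where a: "a \<in> cball a0 r" "y = newton T a"
    by auto
  have "dist (newton T a0) a0 = norm (f a0 T) / norm (D1 a0 a0 0)"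
    by (simp add: newton_def dist_norm norm_divide)
  also have "\<dots> \<le> r / 2"
    using f_small[OF assms] simple by (simp add: divide_le_eq mult.commute)
  finally have "dist (newton T a0) a0 \<le> r / 2" .
  moreover have "dist (newton T a) (newton T a0) \<le> 1/2 * dist a a0"
    using newton_lipschitz[OF assms a(1)] r_pos by simp
  moreover have "dist a a0 \<le> r"
    using a(1) by (simp add: dist_commute)
  ultimately show "y \<in> cball a0 r"
    using a(2) dist_triangle[of "newton T a" a0 "newton T a0"] by (simp add: dist_commute)
qed

lemma unique_zero:
  assumes "T \<in> ball 0 \<delta>"
  shows "\<exists>!a \<in> cball a0 r. f a T = 0"
proof -
  have "\<exists>!a \<in> cball a0 r. newton T a = a"
    by (rule Banach_fix[where c = "1/2"])
       (use assms newton_maps_cball newton_lipschitz r_pos in \<open>auto simp: complete_eq_closed\<close>)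
  then show ?thesis
    by (simp add: newton_fixed_iff)
qed

definition implicit_fun :: "complex \<Rightarrow> complex" where
  "implicit_fun T = (THE a. a \<in> cball a0 r \<and> f a T = 0)"

lemma implicit_fun_mem_cball: "T \<in> ball 0 \<delta> \<Longrightarrow> implicit_fun T \<in> cball a0 r"
  and implicit_fun_root: "T \<in> ball 0 \<delta> \<Longrightarrow> f (implicit_fun T) T = 0"
proof -
  have "implicit_fun T \<in> cball a0 r \<and> f (implicit_fun T) T = 0" if "T \<in> ball 0 \<delta>" for T
    unfolding implicit_fun_def by (rule theI') (use unique_zero[OF that] in blast)
  then show "T \<in> ball 0 \<delta> \<Longrightarrow> implicit_fun T \<in> cball a0 r"
    and "T \<in> ball 0 \<delta> \<Longrightarrow> f (implicit_fun T) T = 0"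
    by blast+
qed

lemma implicit_fun_0: "implicit_fun 0 = a0"
proof -
  have "0 \<in> ball (0 :: complex) \<delta>" "a0 \<in> cball a0 r"
    using \<delta>_pos r_pos by simp_all
  then show ?thesis
    using unique_zero implicit_fun_mem_cball implicit_fun_root zero by blast
qed

lemma implicit_fun_tendsto:
  assumes T0: "T0 \<in> ball 0 \<delta>"
  shows "(implicit_fun \<longlongrightarrow> implicit_fun T0) (at T0)"
proof -
  have bound:
    "norm (implicit_fun T - implicit_fun T0) \<le> 2 * norm (f (implicit_fun T0) T) / norm (D1 a0 a0 0)"
    if T: "T \<in> ball 0 \<delta>" for T
  proof -
    define N where "N = newton T (implicit_fun T) - newton T (implicit_fun T0)"
    define q where "q = f (implicit_fun T0) T / D1 a0 a0 0"
    have "implicit_fun T - implicit_fun T0 = N - q"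
      using implicit_fun_root[OF T] by (simp add: N_def q_def newton_def)
    then have "norm (implicit_fun T - implicit_fun T0) \<le> norm N + norm q"
      by (simp add: norm_triangle_ineq4)
    moreover have "norm N \<le> 1/2 * norm (implicit_fun T - implicit_fun T0)"
      using newton_lipschitz[OF T implicit_fun_mem_cball[OF T] implicit_fun_mem_cball[OF T0]]
      by (simp add: N_def dist_norm)
    ultimately show ?thesis
      by (simp add: q_def norm_divide)
  qed
  have "((\<lambda>T. 2 * norm (f (implicit_fun T0) T) / norm (D1 a0 a0 0)) \<longlongrightarrow> 0) (at T0)"
    using isCont_f[of T0 "implicit_fun T0", unfolded isCont_def] implicit_fun_root[OF T0] simple
    by (auto intro!: tendsto_eq_intros)
  then have "((\<lambda>T. implicit_fun T - implicit_fun T0) \<longlongrightarrow> 0) (at T0)"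
    by (rule Lim_null_comparison[rotated])
       (use eventually_at_in_open'[OF open_ball T0] in \<open>auto elim!: eventually_mono intro: bound\<close>)
  then show ?thesis
    by (simp add: LIM_zero_iff)
qed

lemma implicit_fun_has_derivative:
  assumes T0: "T0 \<in> ball 0 \<delta>"
  defines "g \<equiv> implicit_fun"
  shows "(g has_field_derivative - D2 (g T0) T0 T0 / D1 (g T0) (g T0) T0) (at T0)"
proof -
  have quotient: "(g T - g T0) / (T - T0) = - D2 (g T0) T T0 / D1 (g T) (g T0) T"
    if T: "T \<in> ball 0 \<delta>" "T \<noteq> T0" for T
  proof -
    have "0 = (f (g T) T - f (g T0) T) + (f (g T0) T - f (g T0) T0)"
      using implicit_fun_root[OF T(1)] implicit_fun_root[OF T0] by (simp add: g_def)
    also have "\<dots> = (g T - g T0) * D1 (g T) (g T0) T + (T - T0) * D2 (g T0) T T0"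
      by (simp add: divided_difference1 divided_difference2)
    finally show ?thesis
      using D1_nonzero[OF implicit_fun_mem_cball[OF T(1)] implicit_fun_mem_cball[OF T0] T(1)] T(2)
      by (simp add: g_def field_simps add_eq_0_iff2)
  qed
  have "((\<lambda>T. - D2 (g T0) T T0 / D1 (g T) (g T0) T) \<longlongrightarrow> - D2 (g T0) T0 T0 / D1 (g T0) (g T0) T0) (at T0)"
    unfolding g_def
    by (intro tendsto_intros D1_tendsto D2_tendsto implicit_fun_tendsto[OF T0] D1_nonzero
        implicit_fun_mem_cball T0)
  then have "((\<lambda>T. (g T - g T0) / (T - T0)) \<longlongrightarrow> - D2 (g T0) T0 T0 / D1 (g T0) (g T0) T0) (at T0)"
    by (rule Lim_transform_eventually)
       (use eventually_at_in_open[OF open_ball T0] quotient in \<open>auto elim!: eventually_mono\<close>)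
  then show ?thesis
    by (simp add: has_field_derivative_iff)
qed

lemma implicit_fun_holomorphic: "implicit_fun holomorphic_on ball 0 \<delta>"
  unfolding holomorphic_on_def field_differentiable_def
  using implicit_fun_has_derivative by (metis has_field_derivative_at_within)

end

context simple_zero
begin

theorem implicit_function:
  assumes "\<epsilon> > 0"
  obtains \<delta> \<alpha> where "\<delta> > 0" "\<alpha> holomorphic_on ball 0 \<delta>" "\<alpha> 0 = a0"
    "\<And>T. T \<in> ball 0 \<delta> \<Longrightarrow> f (\<alpha> T) T = 0"
    "\<And>T. T \<in> ball 0 \<delta> \<Longrightarrow> \<alpha> T \<in> cball a0 \<epsilon>"
proof -
  obtain r \<delta> where r: "0 < r" "r \<le> \<epsilon>" "0 < \<delta>"
    "\<And>a b T. a \<in> cball a0 r \<Longrightarrow> b \<in> cball a0 r \<Longrightarrow> T \<in> ball 0 \<delta> \<Longrightarrow>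
       norm (D1 a b T - D1 a0 a0 0) \<le> norm (D1 a0 a0 0) / 2"
    "\<And>T. T \<in> ball 0 \<delta> \<Longrightarrow> norm (f a0 T) \<le> norm (D1 a0 a0 0) * r / 2"
    using contraction_radius[OF assms] by blast
  interpret newton_contraction f D1 D2 a0 r \<delta>
    using r by unfold_locales auto
  show thesis
    by (rule that[OF \<delta>_pos implicit_fun_holomorphic implicit_fun_0 implicit_fun_root])
       (use implicit_fun_mem_cball r(2) in \<open>auto intro: order_trans simp: mem_cball\<close>)
qed

end

section \<open>Bivariate polynomials\<close>

definition poly2 :: "'a::comm_semiring_1 poly poly \<Rightarrow> 'a \<Rightarrow> 'a \<Rightarrow> 'a" where
  "poly2 q a T = poly (map_poly (\<lambda>c. poly c T) q) a"

lemma poly2_0 [simp]: "poly2 0 a T = 0"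
  by (simp add: poly2_def)

lemma poly2_pCons: "poly2 (pCons c q) a T = poly c T + a * poly2 q a T"
  unfolding poly2_def by (cases "c = 0 \<and> q = 0") (auto simp: map_poly_simps)

lemma comm_ring_hom_poly2: "comm_ring_hom (\<lambda>q. poly2 (q :: 'a::comm_ring_1 poly poly) a T)"
proof -
  interpret map_poly_comm_ring_hom "\<lambda>c. poly c T"
    by unfold_locales
  show ?thesis
    unfolding poly2_def by unfold_locales (simp_all add: hom_add hom_mult)
qed

lemma poly_altdef_le:
  fixes p :: "'a::comm_semiring_1 poly"
  assumes "degree p \<le> N"
  shows "poly p x = (\<Sum>i\<le>N. coeff p i * x ^ i)"
  unfolding poly_altdef
  by (rule sum.mono_neutral_left) (use assms in \<open>auto simp: coeff_eq_0\<close>)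

lemma poly2_altdef: "poly2 q a T = (\<Sum>i\<le>degree q. poly (coeff q i) T * a ^ i)"
  unfolding poly2_def
  by (subst poly_altdef_le[of _ "degree q"]) (auto simp: degree_map_poly_le coeff_map_poly)

lemma power_diff_ddiff:
  "c * x ^ i - c * y ^ i = (x - y) * (c * (\<Sum>j<i. y ^ (i - Suc j) * x ^ j))"
  for c x y :: "'a::comm_ring_1"
  using power_diff_sumr2[of x i y] by (metis mult.left_commute right_diff_distrib)

definition poly_ddiff :: "'a::comm_ring_1 poly \<Rightarrow> 'a \<Rightarrow> 'a \<Rightarrow> 'a" where
  "poly_ddiff p x y = (\<Sum>i\<le>degree p. coeff p i * (\<Sum>j<i. y ^ (i - Suc j) * x ^ j))"

lemma poly_diff_ddiff: "poly p x - poly p y = (x - y) * poly_ddiff p x y"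
  unfolding poly_altdef poly_ddiff_def sum_subtractf[symmetric]
  by (subst sum_distrib_left) (intro sum.cong refl power_diff_ddiff)

definition poly2_ddiff1 :: "'a::comm_ring_1 poly poly \<Rightarrow> 'a \<Rightarrow> 'a \<Rightarrow> 'a \<Rightarrow> 'a" where
  "poly2_ddiff1 q a b T = (\<Sum>i\<le>degree q. poly (coeff q i) T * (\<Sum>j<i. b ^ (i - Suc j) * a ^ j))"

definition poly2_ddiff2 :: "'a::comm_ring_1 poly poly \<Rightarrow> 'a \<Rightarrow> 'a \<Rightarrow> 'a \<Rightarrow> 'a" where
  "poly2_ddiff2 q a T T' = (\<Sum>i\<le>degree q. poly_ddiff (coeff q i) T T' * a ^ i)"

lemma poly2_diff_left: "poly2 q a T - poly2 q b T = (a - b) * poly2_ddiff1 q a b T"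
  unfolding poly2_altdef poly2_ddiff1_def sum_subtractf[symmetric]
  by (subst sum_distrib_left) (intro sum.cong refl power_diff_ddiff)

lemma poly2_diff_right: "poly2 q a T - poly2 q a T' = (T - T') * poly2_ddiff2 q a T T'"
  unfolding poly2_altdef poly2_ddiff2_def sum_subtractf[symmetric]
  by (subst sum_distrib_left)
     (intro sum.cong refl, metis left_diff_distrib mult.assoc poly_diff_ddiff)

lemma continuous_poly2_ddiff1:
  "continuous_on UNIV (\<lambda>(a, b, T). poly2_ddiff1 q a b (T :: 'a::real_normed_field))"
  unfolding poly2_ddiff1_def case_prod_unfold by (intro continuous_intros)

lemma continuous_poly2_ddiff2:
  "continuous_on UNIV (\<lambda>(a, T, T'). poly2_ddiff2 q a T (T' :: 'a::real_normed_field))"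
  unfolding poly2_ddiff2_def poly_ddiff_def case_prod_unfold by (intro continuous_intros)

lemma simple_zero_poly2:
  assumes "poly2 q a0 0 = 0" "poly2_ddiff1 q a0 a0 0 \<noteq> 0"
  shows "simple_zero (poly2 q) (poly2_ddiff1 q) (poly2_ddiff2 q) a0"
  using assms poly2_diff_left poly2_diff_right continuous_poly2_ddiff1 continuous_poly2_ddiff2
  by unfold_locales

lemma poly2_ddiff1_diagonal:
  fixes q :: "'a::real_normed_field poly poly"
  assumes factor: "\<And>a. poly2 q a T = (a - a0) * g a" and g: "isCont g a0"
  shows "poly2_ddiff1 q a0 a0 T = g a0"
proof -
  have "((\<lambda>a. poly2_ddiff1 q a a0 T) \<longlongrightarrow> poly2_ddiff1 q a0 a0 T) (at a0)"
    unfolding poly2_ddiff1_def by (intro tendsto_intros)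
  moreover have "\<forall>\<^sub>F a in at a0. g a = poly2_ddiff1 q a a0 T"
    using poly2_diff_left[of q _ T a0] factor
    by (auto simp: eventually_at_filter intro!: always_eventually)
  then have "((\<lambda>a. poly2_ddiff1 q a a0 T) \<longlongrightarrow> g a0) (at a0)"
    using g unfolding isCont_def by (rule Lim_transform_eventually[rotated])
  ultimately show ?thesis
    using tendsto_unique[OF at_neq_bot] by blast
qed

section \<open>Tridiagonal form of \<open>G\<^sub>l\<close>\<close>

text \<open>The coefficient vectors of these polynomials are eigenvectors of the coordinate reversal
  (\<open>coeff_pm_poly_reverse\<close>).\<close>
definition pm_poly :: "nat \<Rightarrow> nat \<Rightarrow> complex poly" where
  "pm_poly n k = [:-1, 1:] ^ k * [:1, 1:] ^ (n - k)"

lemma degree_pm_poly: "k \<le> n \<Longrightarrow> degree (pm_poly n k) = n"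
  unfolding pm_poly_def by (subst degree_mult_eq) (auto simp: degree_power_eq)

lemma reflect_pm_poly: "reflect_poly (pm_poly n k) = Polynomial.smult ((-1) ^ k) (pm_poly n k)"
proof -
  have u: "reflect_poly [:-1, 1:] = Polynomial.smult (-1) [:-1, 1::complex:]"
    by (simp add: reflect_poly_def)
  have v: "reflect_poly [:1, 1:] = [:1, 1::complex:]"
    by (simp add: reflect_poly_def)
  show ?thesis
    unfolding pm_poly_def reflect_poly_mult reflect_poly_power u v smult_power by simp
qed

lemma coeff_pm_poly_reverse:
  assumes "k \<le> n" "i \<le> n"
  shows "coeff (pm_poly n k) (n - i) = (-1) ^ k * coeff (pm_poly n k) i"
  using arg_cong[OF reflect_pm_poly[of n k], of "\<lambda>p. coeff p i"] assms
  by (simp add: coeff_reflect_poly degree_pm_poly)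

lemma pm_poly_diff:
  assumes "k < n"
  shows "[:-1, 1:] ^ k * [:1, 1:] ^ (n - Suc k)
    = Polynomial.smult (1 / 2) (pm_poly n k - pm_poly n (Suc k))"
proof -
  define X where "X = [:-1, 1:] ^ k * [:1, 1 :: complex:] ^ (n - Suc k)"
  have "n - k = Suc (n - Suc k)"
    using assms by simp
  then have "pm_poly n k = X * [:1, 1:]"
    unfolding pm_poly_def X_def by (simp only: power_Suc2 mult_ac)
  moreover have "pm_poly n (Suc k) = X * [:-1, 1:]"
    unfolding pm_poly_def X_def by (simp only: power_Suc2 mult_ac)
  ultimately have "pm_poly n k - pm_poly n (Suc k) = X * ([:1, 1:] - [:-1, 1:])"
    by (simp only: right_diff_distrib)
  also have "[:1, 1:] - [:-1, 1:] = [:2 :: complex:]"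
    by simp
  finally have "pm_poly n k - pm_poly n (Suc k) = [:2:] * X"
    by (simp only: mult.commute)
  then show ?thesis
    by (simp add: X_def)
qed

lemma pderiv_pm_poly:
  assumes "k \<le> n"
  shows "pderiv (pm_poly n k) = Polynomial.smult (of_nat k / 2) (pm_poly n (k - 1))
      + Polynomial.smult ((of_nat n - 2 * of_nat k) / 2) (pm_poly n k)
      - Polynomial.smult ((of_nat n - of_nat k) / 2) (pm_poly n (k + 1))"
proof -
  define u v :: "complex poly" where "u = [:-1, 1:]" and "v = [:1, 1:]"
  have lower: "Polynomial.smult (of_nat k) (u ^ (k - 1) * v ^ (n - k))
      = Polynomial.smult (of_nat k / 2) (pm_poly n (k - 1) - pm_poly n k)"
  proof (cases "k = 0")
    case False
    then have "Suc (k - 1) = k" "n - Suc (k - 1) = n - k"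
      by simp_all
    then show ?thesis
      using pm_poly_diff[of "k - 1" n] assms False by (simp add: u_def v_def)
  qed simp
  have upper: "Polynomial.smult (of_nat (n - k)) (u ^ k * v ^ (n - k - 1))
      = Polynomial.smult (of_nat (n - k) / 2) (pm_poly n k - pm_poly n (k + 1))"
  proof (cases "k = n")
    case False
    then have "n - k - 1 = n - Suc k"
      by simp
    then show ?thesis
      using pm_poly_diff[of k n] assms False by (simp add: u_def v_def)
  qed simp
  have "pderiv (pm_poly n k) = Polynomial.smult (of_nat k) (u ^ (k - 1) * v ^ (n - k))
      + Polynomial.smult (of_nat (n - k)) (u ^ k * v ^ (n - k - 1))"
    by (simp add: pm_poly_def u_def v_def pderiv_mult pderiv_power pderiv_pCons algebra_simps)
  also have "\<dots> = Polynomial.smult (of_nat k / 2) (pm_poly n (k - 1) - pm_poly n k)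
      + Polynomial.smult (of_nat (n - k) / 2) (pm_poly n k - pm_poly n (k + 1))"
    by (simp only: lower upper)
  finally show ?thesis
    using assms by (intro poly_eqI) (simp add: of_nat_diff field_simps)
qed

lemma pm_poly_independent:
  assumes sum: "(\<Sum>k\<le>n. Polynomial.smult (c k) (pm_poly n k)) = 0" and "k \<le> n"
  shows "c k = 0"
proof (rule ccontr)
  assume "c k \<noteq> 0"
  define k0 where "k0 = (LEAST k. k \<le> n \<and> c k \<noteq> 0)"
  have k0: "k0 \<le> n" "c k0 \<noteq> 0"
    using LeastI[of "\<lambda>k. k \<le> n \<and> c k \<noteq> 0" k] \<open>c k \<noteq> 0\<close> assms(2) by (auto simp: k0_def)
  have below: "c j = 0" if "j < k0" for j
    using not_less_Least[of j "\<lambda>k. k \<le> n \<and> c k \<noteq> 0"] that k0 by (auto simp: k0_def)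
  define u v :: "complex poly" where "u = [:-1, 1:]" and "v = [:1, 1:]"
  have others: "u ^ Suc k0 dvd Polynomial.smult (c j) (pm_poly n j)" if "j \<in> {..n} - {k0}" for j
  proof (cases "j < k0")
    case False
    then have "u ^ Suc k0 dvd u ^ j"
      using that by (intro le_imp_power_dvd) auto
    then show ?thesis
      by (simp add: pm_poly_def u_def dvd_smult dvd_mult2)
  qed (simp add: below)
  have "Polynomial.smult (c k0) (pm_poly n k0)
      = - (\<Sum>j\<in>{..n} - {k0}. Polynomial.smult (c j) (pm_poly n j))"
    using sum sum.remove[of "{..n}" k0 "\<lambda>j. Polynomial.smult (c j) (pm_poly n j)"] k0
    by (simp add: eq_neg_iff_add_eq_0)
  then have "u ^ k0 * u dvd u ^ k0 * Polynomial.smult (c k0) (v ^ (n - k0))"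
    using dvd_sum[of "{..n} - {k0}", OF others]
    by (simp add: pm_poly_def u_def v_def mult_ac)
  then have "u dvd Polynomial.smult (c k0) (v ^ (n - k0))"
    by (subst (asm) dvd_times_left_cancel_iff) (auto simp: u_def)
  then have "poly (Polynomial.smult (c k0) (v ^ (n - k0))) 1 = 0"
    unfolding u_def poly_eq_0_iff_dvd by simp
  then show False
    using k0 by (simp add: v_def)
qed

definition exchange_mat :: "nat \<Rightarrow> 'a::zero_neq_one mat" where
  "exchange_mat n = mat n n (\<lambda>(i, j). if i + j + 1 = n then 1 else 0)"

lemma exchange_mat_dims [simp]:
  "exchange_mat n \<in> carrier_mat n n" "dim_row (exchange_mat n) = n" "dim_col (exchange_mat n) = n"
  by (simp_all add: exchange_mat_def)

lemma index_mult_mat_sum: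
  assumes "A \<in> carrier_mat nr n" "B \<in> carrier_mat n nc" "i < nr" "j < nc"
  shows "(A * B) $$ (i, j) = (\<Sum>k\<in>{0..<n}. A $$ (i, k) * B $$ (k, j))"
  using assms by (simp add: scalar_prod_def)

lemma exchange_mat_mult:
  fixes A :: "'a::semiring_1 mat"
  assumes A: "A \<in> carrier_mat n m"
  shows "exchange_mat n * A = mat n m (\<lambda>(i, j). A $$ (n - 1 - i, j))"
proof (rule eq_matI)
  fix i j assume "i < dim_row (mat n m (\<lambda>(i, j). A $$ (n - 1 - i, j)))"
    "j < dim_col (mat n m (\<lambda>(i, j). A $$ (n - 1 - i, j)))"
  then have ij: "i < n" "j < m"
    by simp_all
  have "(exchange_mat n * A) $$ (i, j) = (\<Sum>k\<in>{0..<n}. if k = n - 1 - i then A $$ (k, j) else 0)"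
    unfolding index_mult_mat_sum[OF exchange_mat_dims(1) A ij]
    by (rule sum.cong) (use ij in \<open>auto simp: exchange_mat_def\<close>)
  also have "\<dots> = A $$ (n - 1 - i, j)"
    using ij by simp
  finally show "(exchange_mat n * A) $$ (i, j) = mat n m (\<lambda>(i, j). A $$ (n - 1 - i, j)) $$ (i, j)"
    using ij by simp
qed (use A in auto)

definition deriv_mat :: "nat \<Rightarrow> 'a::semiring_1 mat" where
  "deriv_mat n = mat n n (\<lambda>(i, j). if j = i + 1 then of_nat j else 0)"

lemma deriv_mat_dims [simp]:
  "deriv_mat n \<in> carrier_mat n n" "dim_row (deriv_mat n) = n" "dim_col (deriv_mat n) = n"
  by (simp_all add: deriv_mat_def)

text \<open>\<open>G_l(\<mu>) = \<mu> J (1 - \<mu>\<^sup>-\<^sup>1 D)\<close>, with \<open>J\<close> reversing coordinates; in the chart, \<open>T = 1/\<mu>\<close>.\<close>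
definition G_chart :: "nat \<Rightarrow> complex \<Rightarrow> complex mat" where
  "G_chart l T = exchange_mat l * (1\<^sub>m l - T \<cdot>\<^sub>m deriv_mat l)"

lemma G_chart_dims [simp]:
  "G_chart l T \<in> carrier_mat l l" "dim_row (G_chart l T) = l" "dim_col (G_chart l T) = l"
proof -
  have "1\<^sub>m l - T \<cdot>\<^sub>m deriv_mat l \<in> carrier_mat l l"
    by (rule minus_carrier_mat[OF smult_carrier_mat]) simp
  then show "G_chart l T \<in> carrier_mat l l"
    unfolding G_chart_def by (rule mult_carrier_mat[OF exchange_mat_dims(1)])
  then show "dim_row (G_chart l T) = l" "dim_col (G_chart l T) = l"
    by auto
qed

lemma index_G_chart:
  assumes "i < l" "j < l"
  shows "G_chart l T $$ (i, j) = of_bool (i + j + 1 = l) - T * (if i + j = l then of_nat j else 0)"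
proof -
  have "1\<^sub>m l - T \<cdot>\<^sub>m deriv_mat l \<in> carrier_mat l l"
    by (simp add: minus_carrier_mat[OF smult_carrier_mat])
  moreover have "(i + j = l) = (j = l - 1 - i + 1)"
    using assms by auto
  ultimately show ?thesis
    unfolding G_chart_def using assms by (auto simp: exchange_mat_mult deriv_mat_def)
qed

lemma G_mat_eq_smult_G_chart:
  assumes "\<mu> \<noteq> 0"
  shows "G_mat l \<mu> = \<mu> \<cdot>\<^sub>m G_chart l (1 / \<mu>)"
  by (rule eq_matI) (use assms in \<open>auto simp: G_mat_def index_G_chart of_nat_diff\<close>)

definition pm_mat :: "nat \<Rightarrow> complex mat" where
  "pm_mat l = mat l l (\<lambda>(i, k). coeff (pm_poly (l - 1) k) i)"

lemma pm_mat_dims [simp]: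
  "pm_mat l \<in> carrier_mat l l" "dim_row (pm_mat l) = l" "dim_col (pm_mat l) = l"
  by (simp_all add: pm_mat_def)

definition pm_deriv_mat :: "nat \<Rightarrow> complex mat" where
  "pm_deriv_mat l = mat l l (\<lambda>(j, k).
     of_bool (j = k - 1) * (of_nat k / 2) + of_bool (j = k) * ((of_nat (l - 1) - 2 * of_nat k) / 2)
     - of_bool (j = k + 1) * ((of_nat (l - 1) - of_nat k) / 2))"

lemma pm_deriv_mat_dims [simp]:
  "pm_deriv_mat l \<in> carrier_mat l l" "dim_row (pm_deriv_mat l) = l" "dim_col (pm_deriv_mat l) = l"
  by (simp_all add: pm_deriv_mat_def)

definition sign_mat :: "nat \<Rightarrow> complex mat" where
  "sign_mat l = mat_diag l (\<lambda>k. (-1) ^ k)"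

lemma sign_mat_dims [simp]:
  "sign_mat l \<in> carrier_mat l l" "dim_row (sign_mat l) = l" "dim_col (sign_mat l) = l"
  by (simp_all add: sign_mat_def mat_diag_def)

definition G_tridiag :: "nat \<Rightarrow> complex \<Rightarrow> complex mat" where
  "G_tridiag l T = sign_mat l * (1\<^sub>m l - T \<cdot>\<^sub>m pm_deriv_mat l)"

lemma G_tridiag_dims [simp]:
  "G_tridiag l T \<in> carrier_mat l l" "dim_row (G_tridiag l T) = l" "dim_col (G_tridiag l T) = l"
proof -
  have "1\<^sub>m l - T \<cdot>\<^sub>m pm_deriv_mat l \<in> carrier_mat l l"
    by (rule minus_carrier_mat[OF smult_carrier_mat]) simp
  then show "G_tridiag l T \<in> carrier_mat l l"
    unfolding G_tridiag_def by (rule mult_carrier_mat[OF sign_mat_dims(1)])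
  then show "dim_row (G_tridiag l T) = l" "dim_col (G_tridiag l T) = l"
    by auto
qed

lemma index_G_tridiag:
  assumes "i < l" "j < l"
  shows "G_tridiag l T $$ (i, j) = (-1) ^ i * (of_bool (i = j) - T * pm_deriv_mat l $$ (i, j))"
proof -
  have carrier: "1\<^sub>m l - T \<cdot>\<^sub>m pm_deriv_mat l \<in> carrier_mat l l"
    by (simp add: minus_carrier_mat[OF smult_carrier_mat])
  show ?thesis
    unfolding G_tridiag_def sign_mat_def mat_diag_mult_left[OF carrier] using assms by simp
qed

lemma sum_smult_of_bool:
  "(\<Sum>j<l. Polynomial.smult (of_bool (j = m) * c) (p j))
    = (if m < l then Polynomial.smult c (p m) else 0)"
  for c :: complex and l m :: nat
proof -
  have "(\<Sum>j<l. Polynomial.smult (of_bool (j = m) * c) (p j))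
      = (\<Sum>j<l. if j = m then Polynomial.smult c (p m) else 0)"
    by (rule sum.cong) auto
  then show ?thesis
    by simp
qed

lemma pderiv_pm_poly_sum:
  assumes "k < l"
  shows "pderiv (pm_poly (l - 1) k)
    = (\<Sum>j<l. Polynomial.smult (pm_deriv_mat l $$ (j, k)) (pm_poly (l - 1) j))"
proof -
  define c1 c2 c3 :: complex
    where "c1 = of_nat k / 2" and "c2 = (of_nat (l - 1) - 2 * of_nat k) / 2"
      and "c3 = (of_nat (l - 1) - of_nat k) / 2"
  let ?p = "pm_poly (l - 1)"
  have "(\<Sum>j<l. Polynomial.smult (pm_deriv_mat l $$ (j, k)) (?p j))
      = (\<Sum>j<l. Polynomial.smult (of_bool (j = k - 1) * c1) (?p j)
          + Polynomial.smult (of_bool (j = k) * c2) (?p j)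
          - Polynomial.smult (of_bool (j = k + 1) * c3) (?p j))"
    by (rule sum.cong)
       (use assms in \<open>auto simp: pm_deriv_mat_def c1_def c2_def c3_def smult_add_left
         smult_diff_left\<close>)
  also have "\<dots> = Polynomial.smult c1 (?p (k - 1)) + Polynomial.smult c2 (?p k)
      - (if k + 1 < l then Polynomial.smult c3 (?p (k + 1)) else 0)"
    using assms by (simp add: sum.distrib sum_subtractf sum_smult_of_bool smult_add_left)
  also have "\<dots> = pderiv (?p k)"
  proof (cases "k + 1 < l")
    case False
    then have "l - 1 = k"
      using assms by simp
    then show ?thesis
      using assms False by (simp add: pderiv_pm_poly c1_def c2_def)
  qed (use assms in \<open>simp add: pderiv_pm_poly c1_def c2_def c3_def\<close>)
  finally show ?thesis ..
qed

lemma pm_mat_mult_index: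
  assumes "M \<in> carrier_mat l m" "i < l" "k < m"
  shows "(pm_mat l * M) $$ (i, k)
    = coeff (\<Sum>j<l. Polynomial.smult (M $$ (j, k)) (pm_poly (l - 1) j)) i"
  unfolding index_mult_mat_sum[OF pm_mat_dims(1) assms]
  using assms by (auto simp: pm_mat_def coeff_sum atLeast0LessThan mult.commute intro!: sum.cong)

lemma exchange_mat_mult_pm_mat: "exchange_mat l * pm_mat l = pm_mat l * sign_mat l"
  unfolding exchange_mat_mult[OF pm_mat_dims(1)] sign_mat_def mat_diag_mult_right[OF pm_mat_dims(1)]
proof (rule eq_matI)
  fix i k assume "i < dim_row (mat l l (\<lambda>(i, j). pm_mat l $$ (i, j) * (-1) ^ j))"
    "k < dim_col (mat l l (\<lambda>(i, j). pm_mat l $$ (i, j) * (-1) ^ j))"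
  then have "i < l" "k < l"
    by simp_all
  then show "mat l l (\<lambda>(i, j). pm_mat l $$ (l - 1 - i, j)) $$ (i, k)
      = mat l l (\<lambda>(i, j). pm_mat l $$ (i, j) * (-1) ^ j) $$ (i, k)"
    using coeff_pm_poly_reverse[of k "l - 1" i] by (simp add: pm_mat_def mult.commute)
qed simp_all

lemma deriv_mat_mult_pm_mat: "deriv_mat l * pm_mat l = pm_mat l * pm_deriv_mat l"
proof (rule eq_matI)
  fix i k assume "i < dim_row (pm_mat l * pm_deriv_mat l)" "k < dim_col (pm_mat l * pm_deriv_mat l)"
  then have ik: "i < l" "k < l"
    by simp_all
  have "(deriv_mat l * pm_mat l) $$ (i, k)
      = (\<Sum>j\<in>{0..<l}. if j = i + 1 then of_nat j * coeff (pm_poly (l - 1) k) j else 0)"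
    unfolding index_mult_mat_sum[OF deriv_mat_dims(1) pm_mat_dims(1) ik]
    by (rule sum.cong) (use ik in \<open>auto simp: deriv_mat_def pm_mat_def\<close>)
  also have "\<dots> = coeff (pderiv (pm_poly (l - 1) k)) i"
    using ik by (auto simp: coeff_pderiv coeff_eq_0 degree_pm_poly)
  also have "\<dots> = (pm_mat l * pm_deriv_mat l) $$ (i, k)"
    unfolding pm_mat_mult_index[OF pm_deriv_mat_dims(1) ik] pderiv_pm_poly_sum[OF ik(2)] ..
  finally show "(deriv_mat l * pm_mat l) $$ (i, k) = (pm_mat l * pm_deriv_mat l) $$ (i, k)" .
qed simp_all

lemma G_chart_mult_pm_mat: "G_chart l T * pm_mat l = pm_mat l * G_tridiag l T"
proof -
  let ?J = "exchange_mat l :: complex mat" and ?P = "pm_mat l" and ?D = "pm_deriv_mat l"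
  have "(1\<^sub>m l - T \<cdot>\<^sub>m deriv_mat l) * ?P = 1\<^sub>m l * ?P - (T \<cdot>\<^sub>m deriv_mat l) * ?P"
    by (rule minus_mult_distrib_mat) auto
  also have "\<dots> = ?P * 1\<^sub>m l - ?P * (T \<cdot>\<^sub>m ?D)"
    using mult_smult_assoc_mat[of "deriv_mat l" l l ?P l T] mult_smult_distrib[of ?P l l ?D l T]
    by (simp add: deriv_mat_mult_pm_mat)
  also have "\<dots> = ?P * (1\<^sub>m l - T \<cdot>\<^sub>m ?D)"
    by (rule mult_minus_distrib_mat[symmetric]) auto
  finally have "(1\<^sub>m l - T \<cdot>\<^sub>m deriv_mat l) * ?P = ?P * (1\<^sub>m l - T \<cdot>\<^sub>m ?D)" .
  then have "G_chart l T * ?P = (?J * ?P) * (1\<^sub>m l - T \<cdot>\<^sub>m ?D)"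
    by (simp add: G_chart_def minus_carrier_mat[OF smult_carrier_mat]
        assoc_mult_mat[of _ l l _ l _ l])
  then show ?thesis
    by (simp add: exchange_mat_mult_pm_mat G_tridiag_def minus_carrier_mat[OF smult_carrier_mat]
        assoc_mult_mat[of _ l l _ l _ l])
qed

lemma det_pm_mat_nonzero: "det (pm_mat l) \<noteq> 0"
proof
  assume "det (pm_mat l) = 0"
  then obtain w where w: "w \<in> carrier_vec l" "w \<noteq> 0\<^sub>v l" "pm_mat l *\<^sub>v w = 0\<^sub>v l"
    using det_0_iff_vec_prod_zero[OF pm_mat_dims(1)] by blast
  define n where "n = l - 1"
  have "l \<noteq> 0"
    using w(1,2) by (auto intro!: eq_vecI)
  then have l: "{..<l} = {..n}"
    by (auto simp: n_def)
  define S where "S = (\<Sum>k\<le>n. Polynomial.smult (w $ k) (pm_poly n k))"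
  have "coeff S i = 0" for i
  proof (cases "i < l")
    case True
    have "coeff S i = (pm_mat l *\<^sub>v w) $ i"
      using w(1) True by (auto simp: S_def coeff_sum pm_mat_def scalar_prod_def l n_def
          atLeast0LessThan[symmetric] intro!: sum.cong)
    then show ?thesis
      using w(3) True by simp
  next
    case False
    have "coeff (pm_poly n k) i = 0" if "k \<le> n" for k
      using False that \<open>l \<noteq> 0\<close> by (intro coeff_eq_0) (simp add: degree_pm_poly n_def)
    then show ?thesis
      by (simp add: S_def coeff_sum)
  qed
  then have "S = 0"
    by (intro poly_eqI) simp
  then have "w $ k = 0" if "k < l" for k
    using pm_poly_independent[of "\<lambda>k. w $ k" n k] that l by (auto simp: S_def)
  then show False
    using w(1,2) by (auto intro!: eq_vecI)
qed

definition chart_det :: "nat \<Rightarrow> complex \<Rightarrow> complex \<Rightarrow> complex \<Rightarrow> complex" where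
  "chart_det l s R T = det (G_chart l T + (s * R) \<cdot>\<^sub>m 1\<^sub>m l)"

lemma Xi_poly_chart_det:
  assumes "\<mu> \<noteq> 0"
  shows "Xi_poly l s \<mu> r = \<mu> ^ l * chart_det l s (r / \<mu>) (1 / \<mu>)"
proof -
  have "G_mat l \<mu> + (s * r) \<cdot>\<^sub>m 1\<^sub>m l = \<mu> \<cdot>\<^sub>m (G_chart l (1 / \<mu>) + (s * (r / \<mu>)) \<cdot>\<^sub>m 1\<^sub>m l)"
    using assms by (auto simp: G_mat_eq_smult_G_chart add_smult_distrib_left_mat[of _ l l])
  then show ?thesis
    by (simp add: Xi_poly_def chart_det_def)
qed

lemma chart_det_G_tridiag: "chart_det l s R T = det (G_tridiag l T + (s * R) \<cdot>\<^sub>m 1\<^sub>m l)"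
proof -
  let ?P = "pm_mat l" and ?c = "(s * R) \<cdot>\<^sub>m 1\<^sub>m l"
  have "(G_chart l T + ?c) * ?P = G_chart l T * ?P + ?c * ?P"
    by (rule add_mult_distrib_mat) auto
  also have "?c * ?P = ?P * ?c"
    using mult_smult_assoc_mat[of "1\<^sub>m l" l l ?P l "s * R"]
      mult_smult_distrib[of ?P l l "1\<^sub>m l" l "s * R"]
    by simp
  also have "G_chart l T * ?P + ?P * ?c = ?P * (G_tridiag l T + ?c)"
    by (simp add: G_chart_mult_pm_mat mult_add_distrib_mat[of ?P l l "G_tridiag l T" l ?c])
  finally have "det (G_chart l T + ?c) * det ?P = det ?P * det (G_tridiag l T + ?c)"
    by (metis add_carrier_mat smult_carrier_mat one_carrier_mat G_chart_dims(1) G_tridiag_dims(1)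
        pm_mat_dims(1) det_mult)
  then show ?thesis
    using det_pm_mat_nonzero[of l] by (simp add: chart_det_def mult.commute)
qed

section \<open>Blowing up along \<open>R = e + a T\<close>\<close>

text \<open>Listing the indices satisfying \<open>P\<close> first makes such a matrix block upper triangular
  with diagonal matrices as diagonal blocks.\<close>
lemma det_eq_prod_diag_if_offdiag_crossing:
  assumes A: "A \<in> carrier_mat n n"
    and crossing: "\<And>i j. i < n \<Longrightarrow> j < n \<Longrightarrow> i \<noteq> j \<Longrightarrow> A $$ (i, j) \<noteq> 0 \<Longrightarrow> P i \<and> \<not> P j"
  shows "det A = (\<Prod>i<n. A $$ (i, i))"
proof -
  have vanish: "(\<Prod>i = 0..<n. A $$ (i, p i)) = 0" if p: "p permutes {0..<n}" "p \<noteq> id" for p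
  proof -
    obtain i where i: "p i \<noteq> i"
      using p(2) by (metis eq_id_iff)
    have "i \<in> {0..<n}"
      using i permutes_not_in[OF p(1)] by blast
    then have in_range: "i \<in> {0..<n}" "p i \<in> {0..<n}" "p (p i) \<in> {0..<n}"
      using permutes_in_image[OF p(1)] by simp_all
    have "p i \<noteq> p (p i)"
      using i permutes_inj[OF p(1)] by (metis injD)
    then have "A $$ (i, p i) = 0 \<or> A $$ (p i, p (p i)) = 0"
      using crossing[of i "p i"] crossing[of "p i" "p (p i)"] i in_range by auto
    then obtain j where "j \<in> {0..<n}" "A $$ (j, p j) = 0"
      using in_range by blast
    then show ?thesis
      by (intro prod_zero) auto
  qed
  have "det A = (\<Sum>p\<in>{p. p permutes {0..<n}}. signof p * (\<Prod>i = 0..<n. A $$ (i, p i)))"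
    by (rule det_def'[OF A])
  also have "\<dots> = (\<Sum>p\<in>{id}. signof p * (\<Prod>i = 0..<n. A $$ (i, p i)))"
    by (rule sum.mono_neutral_right) (use vanish permutes_id finite_permutations in auto)
  finally show ?thesis
    by (simp add: atLeast0LessThan)
qed

lemma det_mat_diag: "det (mat_diag n f) = (\<Prod>i<n. f i)"
  by (subst det_eq_prod_diag_if_offdiag_crossing[where P = "\<lambda>_. True"]) (auto simp: mat_diag_def)

text \<open>The rows \<open>i\<close> of \<open>G_tridiag l 0 + s e\<close> that vanish; along \<open>R = e + a T\<close> these rows of
  \<open>G_tridiag l T + s R\<close> are divisible by \<open>T\<close>.\<close>
definition degenerate_row :: "complex \<Rightarrow> complex \<Rightarrow> nat \<Rightarrow> bool" where
  "degenerate_row s e i \<longleftrightarrow> (-1) ^ i + s * e = 0"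

definition degenerate_rows :: "nat \<Rightarrow> complex \<Rightarrow> complex \<Rightarrow> nat set" where
  "degenerate_rows l s e = {i. i < l \<and> degenerate_row s e i}"

lemma degenerate_row_iff: "degenerate_row s e i \<longleftrightarrow> (-1) ^ i = - (s * e)"
  by (auto simp: degenerate_row_def add_eq_0_iff2)

lemma not_degenerate_row_Suc: "degenerate_row s e i \<Longrightarrow> \<not> degenerate_row s e (Suc i)"
  by (auto simp: degenerate_row_def)

text \<open>Row \<open>i\<close> of \<open>G_tridiag l T + s (e + a T)\<close>, divided by \<open>T\<close> if the row is degenerate,
  as a polynomial in \<open>a\<close> with coefficients in \<open>\<complex>[T]\<close>.\<close>
definition blowup_mat :: "nat \<Rightarrow> complex \<Rightarrow> complex \<Rightarrow> complex poly poly mat" where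
  "blowup_mat l s e = mat l l (\<lambda>(i, j).
     let \<tau> = (if degenerate_row s e i then 1 else [:0, 1:])
     in [: [:of_bool (i = j) * ((-1) ^ i + s * e):] - \<tau> * [:(-1) ^ i * pm_deriv_mat l $$ (i, j):],
           \<tau> * [:of_bool (i = j) * s:] :])"

definition blowup_det :: "nat \<Rightarrow> complex \<Rightarrow> complex \<Rightarrow> complex poly poly" where
  "blowup_det l s e = det (blowup_mat l s e)"

definition eval_blowup_mat :: "nat \<Rightarrow> complex \<Rightarrow> complex \<Rightarrow> complex \<Rightarrow> complex \<Rightarrow> complex mat" where
  "eval_blowup_mat l s e a T = map_mat (\<lambda>q. poly2 q a T) (blowup_mat l s e)"

lemma eval_blowup_mat_dims [simp]:
  "eval_blowup_mat l s e a T \<in> carrier_mat l l"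
  "dim_row (eval_blowup_mat l s e a T) = l" "dim_col (eval_blowup_mat l s e a T) = l"
  by (simp_all add: eval_blowup_mat_def blowup_mat_def)

lemma poly2_blowup_det: "poly2 (blowup_det l s e) a T = det (eval_blowup_mat l s e a T)"
proof -
  interpret h: comm_ring_hom "\<lambda>q. poly2 q a T"
    by (rule comm_ring_hom_poly2)
  show ?thesis
    unfolding blowup_det_def eval_blowup_mat_def by (simp only: h.hom_det)
qed

lemma index_eval_blowup_mat:
  assumes "i < l" "j < l"
  shows "eval_blowup_mat l s e a T $$ (i, j) =
    of_bool (i = j) * ((-1) ^ i + s * e)
    + (if degenerate_row s e i then 1 else T)
      * (of_bool (i = j) * s * a - (-1) ^ i * pm_deriv_mat l $$ (i, j))"
  using assms by (simp add: eval_blowup_mat_def blowup_mat_def Let_def poly2_pCons algebra_simps)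

lemma G_tridiag_blowup:
  "G_tridiag l T + (s * (e + a * T)) \<cdot>\<^sub>m 1\<^sub>m l
     = mat_diag l (\<lambda>i. if degenerate_row s e i then T else 1) * eval_blowup_mat l s e a T"
  unfolding mat_diag_mult_left[OF eval_blowup_mat_dims(1)]
  by (rule eq_matI)
     (auto simp: index_G_tridiag index_eval_blowup_mat degenerate_row_iff algebra_simps)

lemma chart_det_blowup:
  "chart_det l s (e + a * T) T
     = T ^ card (degenerate_rows l s e) * poly2 (blowup_det l s e) a T"
proof -
  have "(\<Prod>i<l. if degenerate_row s e i then T else 1) = T ^ card (degenerate_rows l s e)"
    by (simp add: prod.If_cases Collect_conj_eq lessThan_def Int_commute degenerate_rows_def)
  then show ?thesis
    by (simp add: chart_det_G_tridiag G_tridiag_blowup det_mult[of _ l] det_mat_diag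
        poly2_blowup_det)
qed

lemma index_pm_deriv_mat_diag:
  assumes "i < l"
  shows "pm_deriv_mat l $$ (i, i) = (of_nat (l - 1) - 2 * of_nat i) / 2"
  using assms by (cases i) (auto simp: pm_deriv_mat_def)

lemma pm_deriv_mat_offdiag_nonzero:
  assumes "i < l" "j < l" "i \<noteq> j" "pm_deriv_mat l $$ (i, j) \<noteq> 0"
  shows "j = Suc i \<or> i = Suc j"
  using assms by (auto simp: pm_deriv_mat_def split: if_splits)

definition slope :: "nat \<Rightarrow> complex \<Rightarrow> nat \<Rightarrow> complex" where
  "slope l e k = e * (of_nat k - of_nat (l - 1) / 2)"

definition blowup_diag_0 :: "nat \<Rightarrow> complex \<Rightarrow> complex \<Rightarrow> nat \<Rightarrow> complex \<Rightarrow> complex" where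
  "blowup_diag_0 l s e i a =
     (if degenerate_row s e i then s * (a - slope l e i) else (-1) ^ i + s * e)"

lemma poly2_blowup_det_0: "poly2 (blowup_det l s e) a 0 = (\<Prod>i<l. blowup_diag_0 l s e i a)"
proof -
  have "det (eval_blowup_mat l s e a 0) = (\<Prod>i<l. eval_blowup_mat l s e a 0 $$ (i, i))"
  proof (rule det_eq_prod_diag_if_offdiag_crossing[where P = "degenerate_row s e"])
    fix i j assume ij: "i < l" "j < l" "i \<noteq> j" "eval_blowup_mat l s e a 0 $$ (i, j) \<noteq> 0"
    then have "degenerate_row s e i" "pm_deriv_mat l $$ (i, j) \<noteq> 0"
      by (auto simp: index_eval_blowup_mat split: if_splits)
    moreover have "j = Suc i \<or> i = Suc j"
      using pm_deriv_mat_offdiag_nonzero ij \<open>pm_deriv_mat l $$ (i, j) \<noteq> 0\<close> by blast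
    ultimately show "degenerate_row s e i \<and> \<not> degenerate_row s e j"
      using not_degenerate_row_Suc by blast
  qed simp
  also have "\<dots> = (\<Prod>i<l. blowup_diag_0 l s e i a)"
    by (intro prod.cong refl)
       (auto simp: index_eval_blowup_mat index_pm_deriv_mat_diag blowup_diag_0_def slope_def
         degenerate_row_iff field_simps)
  finally show ?thesis
    by (simp add: poly2_blowup_det)
qed

lemma blowup_det_simple_zero:
  assumes "s \<noteq> 0" "e \<noteq> 0" "k \<in> degenerate_rows l s e"
  shows "simple_zero (poly2 (blowup_det l s e)) (poly2_ddiff1 (blowup_det l s e))
           (poly2_ddiff2 (blowup_det l s e)) (slope l e k)"
proof -
  define g where "g a = s * (\<Prod>i\<in>{..<l} - {k}. blowup_diag_0 l s e i a)" for a
  have factor: "poly2 (blowup_det l s e) a 0 = (a - slope l e k) * g a" for a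
    unfolding poly2_blowup_det_0 g_def using assms
    by (subst prod.remove[of _ k]) (auto simp: blowup_diag_0_def degenerate_rows_def)
  have "blowup_diag_0 l s e i (slope l e k) \<noteq> 0" if "i \<noteq> k" for i
    using assms that by (auto simp: blowup_diag_0_def degenerate_row_def slope_def algebra_simps)
  then have "g (slope l e k) \<noteq> 0"
    using assms by (simp add: g_def)
  moreover have "isCont (blowup_diag_0 l s e i) x" for i x
    unfolding blowup_diag_0_def[abs_def]
    by (cases "degenerate_row s e i") (auto intro!: continuous_intros)
  then have "isCont g (slope l e k)"
    unfolding g_def by (intro continuous_intros)
  ultimately have "poly2_ddiff1 (blowup_det l s e) (slope l e k) (slope l e k) 0 \<noteq> 0"
    using poly2_ddiff1_diagonal[OF factor] by simp
  then show ?thesis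
    by (intro simple_zero_poly2) (simp add: factor)
qed

lemma blowup_branch:
  assumes "s \<noteq> 0" "e \<noteq> 0" "k \<in> degenerate_rows l s e" "\<epsilon> > 0"
  obtains \<delta> \<alpha> where "\<delta> > 0" "\<alpha> holomorphic_on ball 0 \<delta>" "\<alpha> 0 = slope l e k"
    "\<And>T. T \<in> ball 0 \<delta> \<Longrightarrow> chart_det l s (e + \<alpha> T * T) T = 0"
    "\<And>T. T \<in> ball 0 \<delta> \<Longrightarrow> \<alpha> T \<in> cball (slope l e k) \<epsilon>"
proof -
  interpret simple_zero "poly2 (blowup_det l s e)" "poly2_ddiff1 (blowup_det l s e)"
      "poly2_ddiff2 (blowup_det l s e)" "slope l e k"
    by (rule blowup_det_simple_zero[OF assms(1-3)])
  obtain \<delta> \<alpha> where "\<delta> > 0" "\<alpha> holomorphic_on ball 0 \<delta>" "\<alpha> 0 = slope l e k"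
    "\<And>T. T \<in> ball 0 \<delta> \<Longrightarrow> poly2 (blowup_det l s e) (\<alpha> T) T = 0"
    "\<And>T. T \<in> ball 0 \<delta> \<Longrightarrow> \<alpha> T \<in> cball (slope l e k) \<epsilon>"
    using implicit_function[OF assms(4)] by blast
  then show thesis
    using that by (simp add: chart_det_blowup)
qed

section \<open>The curve in the chart at infinity\<close>

lemma det_add_smult_one_char_poly:
  fixes A :: "'a::field mat"
  assumes A: "A \<in> carrier_mat n n" and s: "s \<noteq> 0"
  shows "det (A + (s * R) \<cdot>\<^sub>m 1\<^sub>m n) = s ^ n * poly (char_poly ((- 1 / s) \<cdot>\<^sub>m A)) R"
proof -
  have "A + (s * R) \<cdot>\<^sub>m 1\<^sub>m n = s \<cdot>\<^sub>m (- char_matrix ((- 1 / s) \<cdot>\<^sub>m A) R)"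
  proof (rule eq_matI)
    fix i j assume "i < dim_row (s \<cdot>\<^sub>m (- char_matrix ((- 1 / s) \<cdot>\<^sub>m A) R))"
      "j < dim_col (s \<cdot>\<^sub>m (- char_matrix ((- 1 / s) \<cdot>\<^sub>m A) R))"
    then have "i < n" "j < n"
      using A by (simp_all add: char_matrix_def)
    then show "(A + (s * R) \<cdot>\<^sub>m 1\<^sub>m n) $$ (i, j)
        = (s \<cdot>\<^sub>m (- char_matrix ((- 1 / s) \<cdot>\<^sub>m A) R)) $$ (i, j)"
      using A s by (simp add: char_matrix_def field_simps)
  qed (use A in \<open>simp_all add: char_matrix_def\<close>)
  moreover have "dim_col (char_matrix ((- 1 / s) \<cdot>\<^sub>m A) R) = n"
    using A by (simp add: char_matrix_def)
  ultimately show ?thesis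
    using A by (simp add: char_poly_matrix[of _ n])
qed

lemma chart_det_roots_eq:
  assumes "s \<noteq> 0" "finite X" "X \<subseteq> {R. chart_det l s R T = 0}" "l \<le> card X"
  shows "{R. chart_det l s R T = 0} = X"
proof -
  define p where "p = char_poly ((- 1 / s) \<cdot>\<^sub>m G_chart l T)"
  have p: "degree p = l" "p \<noteq> 0"
    using degree_monic_char_poly[of "(- 1 / s) \<cdot>\<^sub>m G_chart l T" l] by (auto simp: p_def)
  have roots: "{R. chart_det l s R T = 0} = {R. poly p R = 0}"
    using assms(1) by (simp add: chart_det_def det_add_smult_one_char_poly p_def)
  have "card {R. poly p R = 0} \<le> card X"
    using card_poly_roots_bound[OF p(2)] p(1) assms(4) by simp
  then show ?thesis
    unfolding roots using assms(2,3) poly_roots_finite[OF p(2)]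
    by (intro card_subset_eq[symmetric]) (auto simp: roots intro: antisym card_mono)
qed

lemma chart_det_at_0: "chart_det l s R 0 = (\<Prod>i<l. (-1) ^ i + s * R)"
proof -
  have "G_tridiag l 0 + (s * R) \<cdot>\<^sub>m 1\<^sub>m l = mat_diag l (\<lambda>i. (-1) ^ i + s * R)"
    by (rule eq_matI) (auto simp: index_G_tridiag mat_diag_def)
  then show ?thesis
    by (simp add: chart_det_G_tridiag det_mat_diag)
qed

lemma chart_det_at_0_eq_0:
  assumes "s \<in> {1, -1}" "chart_det l s R 0 = 0"
  shows "R \<in> {1, -1}" "\<exists>i. i \<in> degenerate_rows l s R"
proof -
  obtain i where i: "i < l" "(-1) ^ i + s * R = 0"
    using assms(2) by (auto simp: chart_det_at_0)
  then have "R = - (s * (-1) ^ i)"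
    using assms(1) by (auto simp: algebra_simps add_eq_0_iff2)
  then show "R \<in> {1, -1}"
    using assms(1) by (cases "even i") auto
  show "\<exists>i. i \<in> degenerate_rows l s R"
    using i by (auto simp: degenerate_rows_def degenerate_row_def)
qed

lemma continuous_on_det:
  fixes M :: "'b::topological_space \<Rightarrow> 'a::real_normed_field mat"
  assumes carrier: "\<And>x. M x \<in> carrier_mat n n"
    and entries: "\<And>i j. i < n \<Longrightarrow> j < n \<Longrightarrow> continuous_on S (\<lambda>x. M x $$ (i, j))"
  shows "continuous_on S (\<lambda>x. det (M x))"
proof -
  have "det (M x) = (\<Sum>p\<in>{p. p permutes {0..<n}}. signof p * (\<Prod>i = 0..<n. M x $$ (i, p i)))" for x
    by (rule det_def'[OF carrier])
  then show ?thesis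
  proof (simp only:,
      intro continuous_on_sum continuous_on_mult continuous_on_const continuous_on_prod)
    fix p i assume "p \<in> {p. p permutes {0..<n}}" "i \<in> {0..<n}"
    then show "continuous_on S (\<lambda>x. M x $$ (i, p i))"
      using entries permutes_in_image by fastforce
  qed
qed

lemma continuous_chart_det: "continuous_on UNIV (\<lambda>(R, T). chart_det l s R T)"
  unfolding chart_det_def case_prod_unfold
proof (rule continuous_on_det)
  fix i j assume ij: "i < l" "j < l"
  then have "(\<lambda>x. (G_chart l (snd x) + (s * fst x) \<cdot>\<^sub>m 1\<^sub>m l) $$ (i, j))
      = (\<lambda>x. of_bool (i + j + 1 = l) - snd x * (if i + j = l then of_nat j else 0)
          + s * fst x * of_bool (i = j))"
    by (auto simp: index_G_chart)
  then show "continuous_on UNIV (\<lambda>x. (G_chart l (snd x) + (s * fst x) \<cdot>\<^sub>m 1\<^sub>m l) $$ (i, j))"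
    by (simp only:) (intro continuous_intros)
qed simp

lemma chart_image_Xi:
  "(\<lambda>(\<mu>, r). (r / \<mu>, 1 / \<mu>)) ` (Xi l s \<inter> {(\<mu>, r). \<mu> \<noteq> 0}) = {(R, T). T \<noteq> 0 \<and> chart_det l s R T = 0}"
proof (intro equalityI subsetI)
  fix x assume "x \<in> (\<lambda>(\<mu>, r). (r / \<mu>, 1 / \<mu>)) ` (Xi l s \<inter> {(\<mu>, r). \<mu> \<noteq> 0})"
  then obtain \<mu> r where "\<mu> \<noteq> 0" "Xi_poly l s \<mu> r = 0" "x = (r / \<mu>, 1 / \<mu>)"
    by (auto simp: Xi_def)
  then show "x \<in> {(R, T). T \<noteq> 0 \<and> chart_det l s R T = 0}"
    by (simp add: Xi_poly_chart_det)
next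
  fix x assume "x \<in> {(R, T). T \<noteq> 0 \<and> chart_det l s R T = 0}"
  then obtain R T where x: "x = (R, T)" "T \<noteq> 0" "chart_det l s R T = 0"
    by auto
  then have "(1 / T, R / T) \<in> Xi l s \<inter> {(\<mu>, r). \<mu> \<noteq> 0}"
    using Xi_poly_chart_det[of "1 / T" l s "R / T"] by (simp add: Xi_def)
  moreover have "x = (\<lambda>(\<mu>, r). (r / \<mu>, 1 / \<mu>)) (1 / T, R / T)"
    using x by simp
  ultimately show "x \<in> (\<lambda>(\<mu>, r). (r / \<mu>, 1 / \<mu>)) ` (Xi l s \<inter> {(\<mu>, r). \<mu> \<noteq> 0})"
    by blast
qed

lemma Xi_closure_chart_eq: "Xi_closure_chart l s = closure {(R, T). T \<noteq> 0 \<and> chart_det l s R T = 0}"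
  by (simp add: Xi_closure_chart_def chart_image_Xi)

lemma Xi_closure_chart_subset: "Xi_closure_chart l s \<subseteq> {(R, T). chart_det l s R T = 0}"
proof -
  have "closed {x. (\<lambda>(R, T). chart_det l s R T) x = 0}"
    by (rule closed_Collect_eq[OF continuous_chart_det continuous_on_const])
  then have "closed {(R, T). chart_det l s R T = 0}"
    by (simp add: case_prod_unfold)
  then show ?thesis
    unfolding Xi_closure_chart_eq by (rule closure_minimal[rotated]) auto
qed

lemma graph_in_Xi_closure_chart:
  assumes cont: "continuous_on (ball 0 \<delta>) \<psi>"
    and root: "\<And>t. t \<in> ball 0 \<delta> \<Longrightarrow> chart_det l s (\<psi> t) t = 0"
    and t: "t \<in> ball 0 \<delta>"
  shows "(\<psi> t, t) \<in> Xi_closure_chart l s"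
proof -
  have off_axis: "(\<psi> t', t') \<in> Xi_closure_chart l s" if "t' \<in> ball 0 \<delta>" "t' \<noteq> 0" for t'
    using root[OF that(1)] that(2) closure_subset by (fastforce simp: Xi_closure_chart_eq)
  show ?thesis
  proof (cases "t = 0")
    case True
    have "((\<lambda>t. (\<psi> t, t)) \<longlongrightarrow> (\<psi> 0, 0)) (at 0)"
      using cont t True by (intro tendsto_Pair tendsto_ident_at)
        (simp add: continuous_on_eq_continuous_at isCont_def)
    moreover have "\<forall>\<^sub>F t' in at 0. (\<psi> t', t') \<in> Xi_closure_chart l s"
      using eventually_at_in_open[OF open_ball t[unfolded True]] off_axis
      by (auto elim!: eventually_mono)
    ultimately show ?thesis
      using True by (intro Lim_in_closed_set) (auto simp: Xi_closure_chart_def)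
  qed (use off_axis t in auto)
qed

lemma card_odd_below: "card {i. i < l \<and> odd i} = l div 2"
proof (induction l)
  case (Suc l)
  show ?case
  proof (cases "odd l")
    case True
    then have "{i. i < Suc l \<and> odd i} = insert l {i. i < l \<and> odd i}"
      by (auto simp: less_Suc_eq)
    then show ?thesis
      using Suc True by (simp add: odd_Suc_div_two)
  next
    case False
    then have "{i. i < Suc l \<and> odd i} = {i. i < l \<and> odd i}"
      by (auto simp: less_Suc_eq)
    then show ?thesis
      using Suc False by (simp add: even_Suc_div_two)
  qed
qed simp

lemma card_even_below: "card {i. i < l \<and> even i} = l - l div 2"
proof -
  have "{i. i < l \<and> even i} = {..<l} - {i. i < l \<and> odd i}"
    by auto
  also have "card \<dots> = card {..<l} - card {i. i < l \<and> odd i}"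
    by (rule card_Diff_subset) auto
  finally show ?thesis
    by (simp add: card_odd_below)
qed

lemma degenerate_row_pm1:
  assumes "s \<in> {1, -1}" "e \<in> {1, -1}"
  shows "degenerate_row s e i \<longleftrightarrow> (if s = e then odd i else even i)"
  using assms by (cases "even i") (auto simp: degenerate_row_def)

lemma card_degenerate_rows:
  assumes "s \<in> {1, -1}" "e \<in> {1, -1}"
  shows "card (degenerate_rows l s e) = (if s = e then l div 2 else l - l div 2)"
  by (simp add: degenerate_rows_def degenerate_row_pm1[OF assms] card_odd_below card_even_below)

lemma slope_diff: "slope l e i - slope l e j = e * (of_nat i - of_nat j)"
  by (simp add: slope_def algebra_simps)

lemma dist_slope_ge:
  assumes "norm e = 1" "i \<noteq> j"
  shows "1 \<le> dist (slope l e i) (slope l e j)"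
proof -
  have "1 \<le> \<bar>real i - real j\<bar>"
    using assms(2) by linarith
  also have "\<bar>real i - real j\<bar> = norm (of_nat i - of_nat j :: complex)"
    by (metis norm_of_real of_real_diff of_real_of_nat_eq)
  finally show ?thesis
    by (simp add: dist_norm slope_diff norm_mult assms(1))
qed

lemma norm_slope_le:
  assumes "norm e = 1" "k < l"
  shows "norm (slope l e k) \<le> real l / 2"
proof -
  have "norm (slope l e k) = norm (of_real (real k - real (l - 1) / 2) :: complex)"
    by (simp add: slope_def norm_mult assms(1))
  also have "\<dots> = \<bar>real k - real (l - 1) / 2\<bar>"
    by (rule norm_of_real)
  also have "\<dots> \<le> real l / 2"
  proof -
    have "real (l - 1) = real l - 1" "real k + 1 \<le> real l"
      using assms(2) by (simp_all add: of_nat_diff)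
    then show ?thesis
      unfolding abs_le_iff by (intro conjI; linarith)
  qed
  finally show ?thesis .
qed

section \<open>Branches at infinity\<close>

lemma transversal_branches_at_infinity_card:
  assumes "finite K" "open U" "(r0, 0) \<in> U" "\<delta> > 0"
    and branches: "\<And>k. k \<in> K \<Longrightarrow> \<phi> k holomorphic_on ball 0 \<delta> \<and> \<phi> k 0 = r0"
    and slopes: "inj_on (\<lambda>k. deriv (\<phi> k) 0) K"
    and local_curve: "C \<inter> U = {(\<phi> k t, t) | k t. k \<in> K \<and> t \<in> ball 0 \<delta>}"
  shows "transversal_branches_at_infinity C r0 (card K)"
proof -
  obtain h where h: "bij_betw h {0..<card K} K"
    using ex_bij_betw_nat_finite[OF assms(1)] by blast
  have h_in: "h j \<in> K" if "j < card K" for j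
    using h that by (auto simp: bij_betw_def)
  have h_onto: "\<exists>j < card K. h j = k" if "k \<in> K" for k
    using h that by (metis atLeastLessThan_iff bij_betw_iff_bijections)
  have "{(\<phi> k t, t) | k t. k \<in> K \<and> t \<in> ball 0 \<delta>}
      = {(\<phi> (h j) t, t) | j t. j < card K \<and> t \<in> ball 0 \<delta>}"
    using h_in h_onto by blast
  moreover have "deriv (\<phi> (h i)) 0 \<noteq> deriv (\<phi> (h j)) 0" if "i < card K" "j < card K" "i \<noteq> j" for i j
  proof -
    have "h i \<noteq> h j"
      using h that by (auto simp: bij_betw_def inj_on_def)
    then show ?thesis
      using slopes h_in[OF that(1)] h_in[OF that(2)] by (auto simp: inj_on_def)
  qed
  ultimately show ?thesis
    unfolding transversal_branches_at_infinity_def using assms h_in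
    by (intro exI[of _ U] exI[of _ \<delta>] exI[of _ "\<lambda>j. \<phi> (h j)"]) auto
qed

text \<open>The
  bounds \<open>1 / 3\<close> and \<open>1 / (l + 1)\<close> keep branches with different labels apart for \<open>T \<noteq> 0\<close>.\<close>
locale chart_branches =
  fixes l :: nat and s :: complex and \<delta> :: real and \<alpha> :: "complex \<Rightarrow> nat \<Rightarrow> complex \<Rightarrow> complex"
  assumes s_pm1: "s \<in> {1, -1}"
    and \<delta>_pos: "0 < \<delta>" and \<delta>_small: "\<delta> \<le> 1 / (real l + 1)"
    and holomorphic: "\<And>e k. e \<in> {1, -1} \<Longrightarrow> k \<in> degenerate_rows l s e \<Longrightarrow> \<alpha> e k holomorphic_on ball 0 \<delta>"
    and at_0: "\<And>e k. e \<in> {1, -1} \<Longrightarrow> k \<in> degenerate_rows l s e \<Longrightarrow> \<alpha> e k 0 = slope l e k"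
    and root: "\<And>e k T. e \<in> {1, -1} \<Longrightarrow> k \<in> degenerate_rows l s e \<Longrightarrow> T \<in> ball 0 \<delta> \<Longrightarrow>
      chart_det l s (e + \<alpha> e k T * T) T = 0"
    and near_slope: "\<And>e k T. e \<in> {1, -1} \<Longrightarrow> k \<in> degenerate_rows l s e \<Longrightarrow> T \<in> ball 0 \<delta> \<Longrightarrow>
      dist (\<alpha> e k T) (slope l e k) \<le> 1 / 3"
begin

definition branch :: "complex \<Rightarrow> nat \<Rightarrow> complex \<Rightarrow> complex" where
  "branch e k T = e + \<alpha> e k T * T"

definition branch_labels :: "(complex \<times> nat) set" where
  "branch_labels = (SIGMA e:{1, -1}. degenerate_rows l s e)"

lemma branch_offset_small:
  assumes e: "e \<in> {1, -1}" and k: "k \<in> degenerate_rows l s e" and T: "T \<in> ball 0 \<delta>"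
  shows "norm (\<alpha> e k T * T) < 1 / 2"
proof -
  have "norm (\<alpha> e k T) \<le> norm (slope l e k) + dist (\<alpha> e k T) (slope l e k)"
    by (metis dist_norm norm_triangle_sub)
  also have "\<dots> \<le> real l / 2 + 1 / 3"
    using norm_slope_le[of e k l] near_slope[OF e k T] e k by (auto simp: degenerate_rows_def)
  finally have "norm (\<alpha> e k T) \<le> (real l + 1) / 2"
    by simp
  then have "norm (\<alpha> e k T) * norm T \<le> (real l + 1) / 2 * norm T"
    by (rule mult_right_mono) simp
  also have "\<dots> < (real l + 1) / 2 * (1 / (real l + 1))"
    using T \<delta>_small by (intro mult_strict_left_mono) auto
  also have "\<dots> = 1 / 2"
    by (simp add: field_simps)
  finally show ?thesis
    by (simp add: norm_mult)
qed

lemma chart_det_branch: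
  assumes "e \<in> {1, -1}" "k \<in> degenerate_rows l s e" "T \<in> ball 0 \<delta>"
  shows "chart_det l s (branch e k T) T = 0"
  using root[OF assms] by (simp add: branch_def)

lemma dist_branch:
  assumes "e \<in> {1, -1}" "k \<in> degenerate_rows l s e" "T \<in> ball 0 \<delta>"
  shows "dist (branch e k T) e < 1 / 2"
  using branch_offset_small[OF assms] by (simp add: branch_def dist_norm)

lemma branch_centre_unique:
  fixes e e' R :: complex
  assumes "e \<in> {1, -1}" "e' \<in> {1, -1}" "dist R e < 1 / 2" "dist R e' < 1 / 2"
  shows "e = e'"
proof (rule ccontr)
  assume "e \<noteq> e'"
  then have "norm (e - e') = 2"
    using assms(1,2) by auto
  then show False
    using dist_triangle3[of e e' R] assms(3,4) by (simp add: dist_norm)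
qed

lemma branch_inj:
  assumes "(e, k) \<in> branch_labels" "(e', k') \<in> branch_labels" "T \<in> ball 0 \<delta>" "T \<noteq> 0"
    and eq: "branch e k T = branch e' k' T"
  shows "(e, k) = (e', k')"
proof -
  have "e = e'"
    using branch_centre_unique[of e e' "branch e k T"] dist_branch[of e k T] dist_branch[of e' k' T]
      assms by (auto simp: branch_labels_def)
  then have "\<alpha> e k T = \<alpha> e k' T"
    using eq assms(4) by (simp add: branch_def)
  then have "dist (slope l e k) (slope l e k') < 1"
    using near_slope[of e k T] near_slope[of e k' T] assms \<open>e = e'\<close>
      dist_triangle3[of "slope l e k" "slope l e k'" "\<alpha> e k T"]
    by (auto simp: branch_labels_def)
  then have "k = k'"
    using dist_slope_ge[of e k k' l] assms(1) by (force simp: branch_labels_def)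
  then show ?thesis
    using \<open>e = e'\<close> by simp
qed

lemma card_branch_labels: "card branch_labels = l"
proof -
  have "card branch_labels = card (degenerate_rows l s 1) + card (degenerate_rows l s (-1))"
    by (simp add: branch_labels_def card_SigmaI degenerate_rows_def)
  also have "\<dots> = l"
    using s_pm1 card_degenerate_rows[of s 1 l] card_degenerate_rows[of s "-1" l] by auto
  finally show ?thesis .
qed

lemma chart_roots:
  assumes "T \<in> ball 0 \<delta>" "T \<noteq> 0"
  shows "{R. chart_det l s R T = 0} = (\<lambda>(e, k). branch e k T) ` branch_labels"
proof (rule chart_det_roots_eq)
  show "s \<noteq> 0"
    using s_pm1 by auto
  show "finite ((\<lambda>(e, k). branch e k T) ` branch_labels)"
    by (simp add: branch_labels_def degenerate_rows_def)
  show "(\<lambda>(e, k). branch e k T) ` branch_labels \<subseteq> {R. chart_det l s R T = 0}"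
    using root assms(1) by (auto simp: branch_labels_def branch_def)
  have "inj_on (\<lambda>(e, k). branch e k T) branch_labels"
    using branch_inj assms by (auto simp: inj_on_def)
  then show "l \<le> card ((\<lambda>(e, k). branch e k T) ` branch_labels)"
    by (simp add: card_image card_branch_labels)
qed

lemma chart_near_branches_subset:
  assumes e: "e \<in> {1, -1}"
  shows "Xi_closure_chart l s \<inter> (ball e (1 / 2) \<times> ball 0 \<delta>)
    \<subseteq> {(branch e k t, t) | k t. k \<in> degenerate_rows l s e \<and> t \<in> ball 0 \<delta>}"
proof
  fix x assume x: "x \<in> Xi_closure_chart l s \<inter> (ball e (1 / 2) \<times> ball 0 \<delta>)"
  then obtain R T where xRT: "x = (R, T)" "dist R e < 1 / 2" "T \<in> ball 0 \<delta>" "chart_det l s R T = 0"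
    using Xi_closure_chart_subset by (fastforce simp: dist_commute)
  show "x \<in> {(branch e k t, t) | k t. k \<in> degenerate_rows l s e \<and> t \<in> ball 0 \<delta>}"
  proof (cases "T = 0")
    case True
    then have "R \<in> {1, -1}" "\<exists>i. i \<in> degenerate_rows l s R"
      using chart_det_at_0_eq_0[OF s_pm1] xRT by auto
    moreover have "R = e"
      using branch_centre_unique[of R e R] calculation(1) e xRT(2) by simp
    ultimately show ?thesis
      using xRT True \<delta>_pos by (auto simp: branch_def)
  next
    case False
    have "R \<in> (\<lambda>(e, k). branch e k T) ` branch_labels"
      using chart_roots[OF xRT(3) False] xRT(4) by blast
    then obtain e' k where ek: "(e', k) \<in> branch_labels" "R = branch e' k T"
      by auto
    then have "e' = e"
      using branch_centre_unique[of e' e R] dist_branch[of e' k T] xRT e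
      by (auto simp: branch_labels_def)
    then show ?thesis
      using ek xRT by (auto simp: branch_labels_def)
  qed
qed

lemma branch_holomorphic:
  assumes "e \<in> {1, -1}" "k \<in> degenerate_rows l s e"
  shows "branch e k holomorphic_on ball 0 \<delta>"
  unfolding branch_def[abs_def] using holomorphic[OF assms] by (intro holomorphic_intros)

lemma chart_near_branches:
  assumes e: "e \<in> {1, -1}"
  shows "Xi_closure_chart l s \<inter> (ball e (1 / 2) \<times> ball 0 \<delta>)
    = {(branch e k t, t) | k t. k \<in> degenerate_rows l s e \<and> t \<in> ball 0 \<delta>}"
proof (rule equalityI[OF chart_near_branches_subset[OF e] subsetI])
  fix x assume "x \<in> {(branch e k t, t) | k t. k \<in> degenerate_rows l s e \<and> t \<in> ball 0 \<delta>}"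
  then obtain k t
    where x: "x = (branch e k t, t)" and k: "k \<in> degenerate_rows l s e" and t: "t \<in> ball 0 \<delta>"
    by blast
  have "(branch e k t, t) \<in> Xi_closure_chart l s"
    using branch_holomorphic[OF e k] chart_det_branch[OF e k] t
    by (intro graph_in_Xi_closure_chart holomorphic_on_imp_continuous_on) auto
  moreover have "(branch e k t, t) \<in> ball e (1 / 2) \<times> ball 0 \<delta>"
    using dist_branch[OF e k t] t by (simp add: dist_commute)
  ultimately show "x \<in> Xi_closure_chart l s \<inter> (ball e (1 / 2) \<times> ball 0 \<delta>)"
    using x by simp
qed

lemma deriv_branch:
  assumes "e \<in> {1, -1}" "k \<in> degenerate_rows l s e"
  shows "deriv (branch e k) 0 = slope l e k"
proof -
  have "\<alpha> e k field_differentiable (at 0)"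
    using holomorphic_on_imp_differentiable_at[OF holomorphic[OF assms] open_ball] \<delta>_pos by simp
  then obtain D where "(\<alpha> e k has_field_derivative D) (at 0)"
    by (auto simp: field_differentiable_def)
  then have "(branch e k has_field_derivative \<alpha> e k 0) (at 0)"
    unfolding branch_def[abs_def] by (auto intro!: derivative_eq_intros)
  then show ?thesis
    using at_0[OF assms] by (simp add: DERIV_imp_deriv)
qed

lemma transversal_branches:
  assumes e: "e \<in> {1, -1}"
  shows "transversal_branches_at_infinity (Xi_closure_chart l s) e (card (degenerate_rows l s e))"
proof (rule transversal_branches_at_infinity_card[OF _ _ _ \<delta>_pos _ _ chart_near_branches[OF e]])
  show "finite (degenerate_rows l s e)" "open (ball e (1 / 2) \<times> ball 0 \<delta>)"
    by (simp_all add: degenerate_rows_def open_Times)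
  show "(e, 0) \<in> ball e (1 / 2) \<times> ball 0 \<delta>"
    using \<delta>_pos by simp
  show "branch e k holomorphic_on ball 0 \<delta> \<and> branch e k 0 = e" if "k \<in> degenerate_rows l s e" for k
    using branch_holomorphic[OF e that] by (simp add: branch_def)
  have "slope l e i = slope l e j \<Longrightarrow> i = j" for i j
    using dist_slope_ge[of e i j l] e by force
  then show "inj_on (\<lambda>k. deriv (branch e k) 0) (degenerate_rows l s e)"
    using deriv_branch[OF e] by (auto simp: inj_on_def)
qed

end

lemma chart_branches_exist:
  assumes s: "s \<in> {1, -1}"
  shows "\<exists>\<delta> \<alpha>. chart_branches l s \<delta> \<alpha>"
proof -
  define labels where "labels = (SIGMA e:{1::complex, -1}. degenerate_rows l s e)"
  define P where "P \<delta> e k a \<longleftrightarrow> a holomorphic_on ball 0 \<delta> \<and> a 0 = slope l e k \<and>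
      (\<forall>T\<in>ball 0 \<delta>. chart_det l s (e + a T * T) T = 0 \<and> dist (a T) (slope l e k) \<le> 1 / 3)"
    for \<delta> e k and a :: "complex \<Rightarrow> complex"
  have "\<forall>\<^sub>F \<delta> in at_right 0. \<exists>a. P \<delta> (fst x) (snd x) a" if "x \<in> labels" for x
  proof -
    have "s \<noteq> 0" "fst x \<noteq> 0" "snd x \<in> degenerate_rows l s (fst x)" "(1 / 3 :: real) > 0"
      using s that by (auto simp: labels_def)
    then obtain \<delta>0 a where "\<delta>0 > 0" "a holomorphic_on ball 0 \<delta>0" "a 0 = slope l (fst x) (snd x)"
      "\<And>T. T \<in> ball 0 \<delta>0 \<Longrightarrow> chart_det l s (fst x + a T * T) T = 0"
      "\<And>T. T \<in> ball 0 \<delta>0 \<Longrightarrow> a T \<in> cball (slope l (fst x) (snd x)) (1 / 3)"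
      by (rule blowup_branch) blast
    then have "P \<delta> (fst x) (snd x) a" if "\<delta> < \<delta>0" for \<delta>
      using that by (auto simp: P_def dist_commute intro: holomorphic_on_subset)
    then show ?thesis
      unfolding eventually_at_right_field using \<open>\<delta>0 > 0\<close> by blast
  qed
  then have "\<forall>\<^sub>F \<delta> in at_right 0. \<forall>x\<in>labels. \<exists>a. P \<delta> (fst x) (snd x) a"
    by (intro eventually_ball_finite) (auto simp: labels_def degenerate_rows_def)
  moreover have "\<forall>\<^sub>F \<delta> in at_right 0. 0 < \<delta> \<and> \<delta> < 1 / (real l + 1)"
    unfolding eventually_at_right_field by (intro exI[of _ "1 / (real l + 1)"]) auto
  ultimately obtain \<delta> where \<delta>: "0 < \<delta>" "\<delta> < 1 / (real l + 1)" "\<forall>x\<in>labels. \<exists>a. P \<delta> (fst x) (snd x) a"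
    using eventually_happens'[OF trivial_limit_at_right_real] eventually_conj by blast
  then obtain f where "\<forall>x\<in>labels. P \<delta> (fst x) (snd x) (f x)"
    by (metis bchoice)
  then have "chart_branches l s \<delta> (\<lambda>e k. f (e, k))"
    using s \<delta> by unfold_locales (auto simp: P_def labels_def)
  then show ?thesis
    by blast
qed

theorem proposition3p3:
  fixes l :: nat
  assumes "l \<ge> 1"
  shows "\<forall>s \<in> {1::complex, -1}. \<forall>e \<in> {1::complex, -1}.
           transversal_branches_at_infinity (Xi_closure_chart l s) e
             (if s = e then l div 2 else l - l div 2)"
proof (intro ballI)
  fix s e :: complex assume s: "s \<in> {1, -1}" and e: "e \<in> {1, -1}"
  obtain \<delta> \<alpha> where "chart_branches l s \<delta> \<alpha>"
    using chart_branches_exist[OF s] by blast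
  then interpret chart_branches l s \<delta> \<alpha> .
  show "transversal_branches_at_infinity (Xi_closure_chart l s) e
      (if s = e then l div 2 else l - l div 2)"
    using transversal_branches[OF e] card_degenerate_rows[OF s e] by simp
qed

end
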